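(* Let $G$ be a finite Frobenius group with abelian Frobenius kernel $N$ and abelian Frobenius complement $H$. Then $$A_G(t)=\frac{1}{|G|}\left[\frac{1}{1-|G|t}+\frac{|N|-1}{1-|N|t}+\frac{|N|(|H|-1)}{1-|H|t}\right]$$ and $$B_G(t)=\frac{1}{1-t}\left[1+\frac{(|N|-1)t}{|H|(1-|N|t)}+\frac{(|H|-1)t}{1-|H|t}\right].$$
   Context: A finite group $G$ is a Frobenius group if it has a proper non-trivial subgroup $H$ (a Frobenius complement) such that $H\cap gHg^{-1}=\{1\}$ for all $g\in G\setminus H$; the Frobenius kernel is $N=\left(G\setminus\bigcup_{g\in G}gHg^{-1}\right)\cup\{1\}$, a normal subgroup with $G=N\rtimes H$. For a finite group $G$ and $n\ge0$, $G$ acts on $G^n$ by simultaneous conjugation; let $G^{(n)}\subseteq G^n$ be the set of $n$-tuples of pairwise commuting elements. Let $\alpha_{G,n}$ (resp. $\beta_{G,n}$) be the number of orbits on $G^n$ (resp. $G^{(n)}$), and $A_G(t)=\sum_{n\ge0}\alpha_{G,n}t^n$, $B_G(t)=\sum_{n\ge0}\beta_{G,n}t^n$. *)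

theory Defs
  imports "HOL-Algebra.Group" "HOL-Computational_Algebra.Formal_Power_Series"
begin

definition conj_set :: "('a, 'b) monoid_scheme \<Rightarrow> 'a \<Rightarrow> 'a set \<Rightarrow> 'a set" where
  "conj_set G g H = {g \<otimes>\<^bsub>G\<^esub> h \<otimes>\<^bsub>G\<^esub> inv\<^bsub>G\<^esub> g | h. h \<in> H}"

definition frobenius_complement :: "('a, 'b) monoid_scheme \<Rightarrow> 'a set \<Rightarrow> bool" where
  "frobenius_complement G H \<longleftrightarrow> subgroup H G \<and> H \<noteq> {\<one>\<^bsub>G\<^esub>} \<and> H \<noteq> carrier G \<and>
     (\<forall>g \<in> carrier G - H. H \<inter> conj_set G g H = {\<one>\<^bsub>G\<^esub>})"

definition frobenius_kernel :: "('a, 'b) monoid_scheme \<Rightarrow> 'a set \<Rightarrow> 'a set" where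
  "frobenius_kernel G H = (carrier G - (\<Union>g \<in> carrier G. conj_set G g H)) \<union> {\<one>\<^bsub>G\<^esub>}"

definition conj_tuple :: "('a, 'b) monoid_scheme \<Rightarrow> 'a \<Rightarrow> 'a list \<Rightarrow> 'a list" where
  "conj_tuple G g xs = map (\<lambda>x. g \<otimes>\<^bsub>G\<^esub> x \<otimes>\<^bsub>G\<^esub> inv\<^bsub>G\<^esub> g) xs"

definition tuples :: "('a, 'b) monoid_scheme \<Rightarrow> nat \<Rightarrow> 'a list set" where
  "tuples G n = {xs. length xs = n \<and> set xs \<subseteq> carrier G}"

definition comm_tuples :: "('a, 'b) monoid_scheme \<Rightarrow> nat \<Rightarrow> 'a list set" where
  "comm_tuples G n = {xs \<in> tuples G n. \<forall>x \<in> set xs. \<forall>y \<in> set xs. x \<otimes>\<^bsub>G\<^esub> y = y \<otimes>\<^bsub>G\<^esub> x}"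

definition num_orbits :: "('a, 'b) monoid_scheme \<Rightarrow> 'a list set \<Rightarrow> nat" where
  "num_orbits G S = card {{conj_tuple G g xs | g. g \<in> carrier G} | xs. xs \<in> S}"

definition alpha :: "('a, 'b) monoid_scheme \<Rightarrow> nat \<Rightarrow> nat" where
  "alpha G n = num_orbits G (tuples G n)"

definition beta :: "('a, 'b) monoid_scheme \<Rightarrow> nat \<Rightarrow> nat" where
  "beta G n = num_orbits G (comm_tuples G n)"

definition A_fps :: "('a, 'b) monoid_scheme \<Rightarrow> real fps" where
  "A_fps G = Abs_fps (\<lambda>n. real (alpha G n))"

definition B_fps :: "('a, 'b) monoid_scheme \<Rightarrow> real fps" where
  "B_fps G = Abs_fps (\<lambda>n. real (beta G n))"

end

theory Submission
  imports Defs "HOL-Algebra.Group_Action"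
begin

text \<open>
  By Burnside's lemma, |G| alpha_n is the sum over g of |C(g)|^n, where C(g) is the centralizer
  of g. Likewise |G| beta_n is the sum over g of the number of commuting n-tuples in C(g), which
  is the number of commuting (n+1)-tuples. In a Frobenius group with abelian kernel and complement,
  C(1) = G, C(g) = N for the |N| - 1 elements g of N - {1}, and C(g) is a conjugate of H for each
  of the |N| (|H| - 1) elements outside N; all of these except G are abelian. Both sums are
  therefore combinations of |G|^n, |N|^n and |H|^n, and the generating functions are sums of
  geometric series.
\<close>

definition centralizer :: "('a, 'b) monoid_scheme \<Rightarrow> 'a \<Rightarrow> 'a set" where
  "centralizer G g = {y \<in> carrier G. g \<otimes>\<^bsub>G\<^esub> y = y \<otimes>\<^bsub>G\<^esub> g}"

lemma card_eq_card_image_mult_fibres: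
  assumes "finite A" and "\<And>y. y \<in> f ` A \<Longrightarrow> card {x \<in> A. f x = y} = k"
  shows "card A = card (f ` A) * k"
proof -
  have "card A = (\<Sum>y\<in>f ` A. card {x \<in> A. f x = y})"
    using sum.image_gen[OF assms(1), of "\<lambda>_. 1::nat" f] by simp
  then show ?thesis using assms(2) by simp
qed

section \<open>Conjugation and centralizers\<close>

context group
begin

lemma inv_mult_cancel_left: "a \<in> carrier G \<Longrightarrow> x \<in> carrier G \<Longrightarrow> inv a \<otimes> (a \<otimes> x) = x"
  by (simp flip: m_assoc)

lemma mult_inv_cancel_left: "a \<in> carrier G \<Longrightarrow> x \<in> carrier G \<Longrightarrow> a \<otimes> (inv a \<otimes> x) = x"
  by (simp flip: m_assoc)

lemma conj_eq_self_iff: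
  assumes "g \<in> carrier G" "x \<in> carrier G"
  shows "g \<otimes> x \<otimes> inv g = x \<longleftrightarrow> g \<otimes> x = x \<otimes> g"
proof
  assume "g \<otimes> x \<otimes> inv g = x"
  then have "g \<otimes> x \<otimes> inv g \<otimes> g = x \<otimes> g" by simp
  then show "g \<otimes> x = x \<otimes> g" using assms by (simp add: m_assoc)
next
  assume "g \<otimes> x = x \<otimes> g"
  then show "g \<otimes> x \<otimes> inv g = x" using assms by (simp add: m_assoc)
qed

lemma conj_eq_one_iff:
  assumes "a \<in> carrier G" "x \<in> carrier G"
  shows "a \<otimes> x \<otimes> inv a = \<one> \<longleftrightarrow> x = \<one>"
  using assms conjugation_is_inj[of a x \<one>] by auto

lemma conj_mult:
  assumes "a \<in> carrier G" "x \<in> carrier G" "y \<in> carrier G"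
  shows "(a \<otimes> x \<otimes> inv a) \<otimes> (a \<otimes> y \<otimes> inv a) = a \<otimes> (x \<otimes> y) \<otimes> inv a"
  using assms by (simp add: m_assoc inv_solve_left')

lemma conj_conj:
  assumes "a \<in> carrier G" "b \<in> carrier G" "x \<in> carrier G"
  shows "a \<otimes> (b \<otimes> x \<otimes> inv b) \<otimes> inv a = (a \<otimes> b) \<otimes> x \<otimes> inv (a \<otimes> b)"
  using assms by (simp add: m_assoc inv_mult_group)

lemma conj_commute_iff:
  assumes "a \<in> carrier G" "x \<in> carrier G" "y \<in> carrier G"
  shows "(a \<otimes> x \<otimes> inv a) \<otimes> (a \<otimes> y \<otimes> inv a) = (a \<otimes> y \<otimes> inv a) \<otimes> (a \<otimes> x \<otimes> inv a)
    \<longleftrightarrow> x \<otimes> y = y \<otimes> x"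
proof -
  have "(a \<otimes> x \<otimes> inv a) \<otimes> (a \<otimes> y \<otimes> inv a) = (a \<otimes> y \<otimes> inv a) \<otimes> (a \<otimes> x \<otimes> inv a)
      \<longleftrightarrow> a \<otimes> (x \<otimes> y) \<otimes> inv a = a \<otimes> (y \<otimes> x) \<otimes> inv a"
    using assms by (simp add: conj_mult)
  also have "\<dots> \<longleftrightarrow> x \<otimes> y = y \<otimes> x"
    using assms conjugation_is_inj[OF assms(1)] by auto
  finally show ?thesis .
qed

lemma centralizer_subset: "centralizer G g \<subseteq> carrier G"
  unfolding centralizer_def by auto

lemma centralizer_one: "centralizer G \<one> = carrier G"
  unfolding centralizer_def by auto

lemma mem_conj_set_iff:
  assumes "a \<in> carrier G" "X \<subseteq> carrier G"
  shows "y \<in> conj_set G a X \<longleftrightarrow> y \<in> carrier G \<and> inv a \<otimes> y \<otimes> a \<in> X"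
proof
  assume "y \<in> conj_set G a X"
  then obtain x where "x \<in> X" "y = a \<otimes> x \<otimes> inv a"
    unfolding conj_set_def by blast
  with assms show "y \<in> carrier G \<and> inv a \<otimes> y \<otimes> a \<in> X"
    by (auto simp: m_assoc inv_mult_cancel_left)
next
  assume y: "y \<in> carrier G \<and> inv a \<otimes> y \<otimes> a \<in> X"
  with assms have "y = a \<otimes> (inv a \<otimes> y \<otimes> a) \<otimes> inv a"
    by (simp add: m_assoc mult_inv_cancel_left)
  with y show "y \<in> conj_set G a X"
    unfolding conj_set_def by blast
qed

lemma conj_set_subset: "a \<in> carrier G \<Longrightarrow> X \<subseteq> carrier G \<Longrightarrow> conj_set G a X \<subseteq> carrier G"
  using mem_conj_set_iff by blast

lemma conj_set_mono: "X \<subseteq> Y \<Longrightarrow> conj_set G a X \<subseteq> conj_set G a Y"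
  unfolding conj_set_def by blast

lemma card_conj_set:
  assumes "a \<in> carrier G" "X \<subseteq> carrier G"
  shows "card (conj_set G a X) = card X"
proof -
  have "conj_set G a X = (\<lambda>x. a \<otimes> x \<otimes> inv a) ` X"
    unfolding conj_set_def by blast
  moreover have "inj_on (\<lambda>x. a \<otimes> x \<otimes> inv a) X"
    using assms by (auto simp: inj_on_def intro: conjugation_is_inj)
  ultimately show ?thesis by (simp add: card_image)
qed

lemma conj_set_commuting:
  assumes "a \<in> carrier G" "X \<subseteq> carrier G" "\<forall>x\<in>X. \<forall>y\<in>X. x \<otimes> y = y \<otimes> x"
  shows "\<forall>x\<in>conj_set G a X. \<forall>y\<in>conj_set G a X. x \<otimes> y = y \<otimes> x"
  using assms conj_commute_iff[OF assms(1)] unfolding conj_set_def by blast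

lemma centralizer_conj:
  assumes a: "a \<in> carrier G" and x: "x \<in> carrier G"
  shows "centralizer G (a \<otimes> x \<otimes> inv a) = conj_set G a (centralizer G x)"
proof (intro equalityI subsetI)
  fix y assume "y \<in> centralizer G (a \<otimes> x \<otimes> inv a)"
  then have y: "y \<in> carrier G" "(a \<otimes> x \<otimes> inv a) \<otimes> y = y \<otimes> (a \<otimes> x \<otimes> inv a)"
    unfolding centralizer_def by auto
  have "y = a \<otimes> (inv a \<otimes> y \<otimes> a) \<otimes> inv a"
    using a y(1) by (simp add: m_assoc mult_inv_cancel_left)
  with y a x have "x \<otimes> (inv a \<otimes> y \<otimes> a) = (inv a \<otimes> y \<otimes> a) \<otimes> x"
    using conj_commute_iff[of a x "inv a \<otimes> y \<otimes> a"] by simp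
  then show "y \<in> conj_set G a (centralizer G x)"
    using a y(1) centralizer_subset mem_conj_set_iff unfolding centralizer_def by auto
next
  fix y assume "y \<in> conj_set G a (centralizer G x)"
  then obtain z where "z \<in> carrier G" "x \<otimes> z = z \<otimes> x" "y = a \<otimes> z \<otimes> inv a"
    unfolding conj_set_def centralizer_def by blast
  with a x show "y \<in> centralizer G (a \<otimes> x \<otimes> inv a)"
    using conj_commute_iff[of a x z] unfolding centralizer_def by auto
qed

end

section \<open>Orbits of simultaneous conjugation on tuples\<close>

context group
begin

lemma conj_tuple_one: "set xs \<subseteq> carrier G \<Longrightarrow> conj_tuple G \<one> xs = xs"
  by (induction xs) (auto simp: conj_tuple_def)

lemma conj_tuple_mult:
  assumes "g \<in> carrier G" "h \<in> carrier G" "set xs \<subseteq> carrier G"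
  shows "conj_tuple G (g \<otimes> h) xs = conj_tuple G g (conj_tuple G h xs)"
  using assms by (induction xs) (auto simp: conj_tuple_def m_assoc inv_mult_group)

lemma conj_tuple_eq_self_iff:
  assumes "g \<in> carrier G" "set xs \<subseteq> carrier G"
  shows "conj_tuple G g xs = xs \<longleftrightarrow> set xs \<subseteq> centralizer G g"
proof -
  have "conj_tuple G g xs = xs \<longleftrightarrow> (\<forall>x\<in>set xs. g \<otimes> x \<otimes> inv g = x)"
    unfolding conj_tuple_def using map_eq_conv[of _ xs id] by simp
  also have "\<dots> \<longleftrightarrow> set xs \<subseteq> centralizer G g"
    using assms conj_eq_self_iff unfolding centralizer_def by blast
  finally show ?thesis .
qed

lemma conj_tuple_group_action:
  assumes S: "\<forall>xs\<in>S. set xs \<subseteq> carrier G"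
    and closed: "\<forall>g\<in>carrier G. \<forall>xs\<in>S. conj_tuple G g xs \<in> S"
  shows "group_action G S (\<lambda>g. restrict (conj_tuple G g) S)"
proof -
  let ?\<phi> = "\<lambda>g. restrict (conj_tuple G g) S"
  have bij: "?\<phi> g \<in> Bij S" if g: "g \<in> carrier G" for g
  proof -
    have "bij_betw (conj_tuple G g) S S"
      by (rule bij_betw_byWitness[where f' = "conj_tuple G (inv g)"])
        (use g S closed in \<open>auto simp flip: conj_tuple_mult simp: conj_tuple_one\<close>)
    then show ?thesis unfolding Bij_def by (simp add: bij_betw_def inj_on_def)
  qed
  have "?\<phi> \<in> hom G (BijGroup S)"
  proof (rule homI)
    fix g assume "g \<in> carrier G"
    then show "?\<phi> g \<in> carrier (BijGroup S)"
      using bij by (simp add: BijGroup_def)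
  next
    fix g h assume "g \<in> carrier G" "h \<in> carrier G"
    then show "?\<phi> (g \<otimes> h) = ?\<phi> g \<otimes>\<^bsub>BijGroup S\<^esub> ?\<phi> h"
      using bij conj_tuple_mult S closed by (auto simp: BijGroup_def compose_def fun_eq_iff)
  qed
  then show ?thesis unfolding group_action_def group_hom_def
    by (simp add: group_BijGroup group_hom_axioms.intro is_group)
qed

lemma burnside_conj_tuples:
  assumes "finite (carrier G)" "finite S"
    and S: "\<forall>xs\<in>S. set xs \<subseteq> carrier G"
    and closed: "\<forall>g\<in>carrier G. \<forall>xs\<in>S. conj_tuple G g xs \<in> S"
  shows "num_orbits G S * order G = (\<Sum>g\<in>carrier G. card {xs \<in> S. set xs \<subseteq> centralizer G g})"
proof -
  let ?\<phi> = "\<lambda>g. restrict (conj_tuple G g) S"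
  interpret group_action G S ?\<phi> by (rule conj_tuple_group_action[OF S closed])
  have "orbits G S ?\<phi> = {{conj_tuple G g xs | g. g \<in> carrier G} | xs. xs \<in> S}"
    unfolding orbits_def orbit_def by auto
  moreover have "invariants S ?\<phi> g = {xs \<in> S. set xs \<subseteq> centralizer G g}" if "g \<in> carrier G" for g
    using that S conj_tuple_eq_self_iff unfolding invariants_def by auto
  ultimately show ?thesis
    using burnside[OF assms(1,2)] unfolding num_orbits_def by simp
qed

lemma tuples_conj_closed: "g \<in> carrier G \<Longrightarrow> xs \<in> tuples G n \<Longrightarrow> conj_tuple G g xs \<in> tuples G n"
  unfolding tuples_def conj_tuple_def by auto

lemma comm_tuples_conj_closed:
  assumes g: "g \<in> carrier G" and xs: "xs \<in> comm_tuples G n"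
  shows "conj_tuple G g xs \<in> comm_tuples G n"
proof -
  have "x \<otimes> y = y \<otimes> x"
    if xy: "x \<in> set (conj_tuple G g xs)" "y \<in> set (conj_tuple G g xs)" for x y
  proof -
    obtain p q where "p \<in> set xs" "q \<in> set xs" "x = g \<otimes> p \<otimes> inv g" "y = g \<otimes> q \<otimes> inv g"
      using xy unfolding conj_tuple_def by auto
    moreover have "p \<in> carrier G" "q \<in> carrier G" "p \<otimes> q = q \<otimes> p"
      using calculation(1,2) xs unfolding comm_tuples_def tuples_def by auto
    ultimately show ?thesis using g conj_mult[of g p q] conj_mult[of g q p] by simp
  qed
  with xs tuples_conj_closed[OF g] show ?thesis unfolding comm_tuples_def by auto
qed

lemma finite_tuples: "finite (carrier G) \<Longrightarrow> finite (tuples G n)"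
proof -
  assume "finite (carrier G)"
  moreover have "tuples G n = {xs. set xs \<subseteq> carrier G \<and> length xs = n}"
    unfolding tuples_def by auto
  ultimately show ?thesis using finite_lists_length_eq by simp
qed

lemma finite_comm_tuples: "finite (carrier G) \<Longrightarrow> finite (comm_tuples G n)"
  using finite_tuples unfolding comm_tuples_def by simp

lemma card_tuples_in:
  assumes "X \<subseteq> carrier G" "finite X"
  shows "card {xs \<in> tuples G n. set xs \<subseteq> X} = card X ^ n"
proof -
  have "{xs \<in> tuples G n. set xs \<subseteq> X} = {xs. set xs \<subseteq> X \<and> length xs = n}"
    using assms(1) unfolding tuples_def by auto
  then show ?thesis using card_lists_length_eq[OF assms(2)] by simp
qed

lemma card_comm_tuples_in_commuting:
  assumes "X \<subseteq> carrier G" "finite X" and comm: "\<forall>x\<in>X. \<forall>y\<in>X. x \<otimes> y = y \<otimes> x"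
  shows "card {xs \<in> comm_tuples G n. set xs \<subseteq> X} = card X ^ n"
proof -
  have "{xs \<in> comm_tuples G n. set xs \<subseteq> X} = {xs \<in> tuples G n. set xs \<subseteq> X}"
    using comm unfolding comm_tuples_def by blast
  then show ?thesis using card_tuples_in[OF assms(1,2)] by simp
qed

lemma Cons_mem_comm_tuples:
  "g # xs \<in> comm_tuples G (Suc n) \<longleftrightarrow>
     g \<in> carrier G \<and> xs \<in> comm_tuples G n \<and> set xs \<subseteq> centralizer G g"
proof -
  have "(\<forall>x\<in>set (g # xs). \<forall>y\<in>set (g # xs). x \<otimes> y = y \<otimes> x) \<longleftrightarrow>
      (\<forall>x\<in>set xs. \<forall>y\<in>set xs. x \<otimes> y = y \<otimes> x) \<and> (\<forall>x\<in>set xs. g \<otimes> x = x \<otimes> g)"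
    by auto
  then show ?thesis unfolding comm_tuples_def tuples_def centralizer_def by auto
qed

lemma card_comm_tuples_Suc:
  assumes "finite (carrier G)"
  shows "card (comm_tuples G (Suc n)) =
    (\<Sum>g\<in>carrier G. card {xs \<in> comm_tuples G n. set xs \<subseteq> centralizer G g})"
proof -
  let ?C = "\<lambda>g. {xs \<in> comm_tuples G n. set xs \<subseteq> centralizer G g}"
  have "comm_tuples G (Suc n) = (\<lambda>(g, xs). g # xs) ` (SIGMA g:carrier G. ?C g)"
  proof (intro equalityI subsetI)
    fix ys assume ys: "ys \<in> comm_tuples G (Suc n)"
    then obtain g xs where "ys = g # xs"
      unfolding comm_tuples_def tuples_def by (cases ys) auto
    with ys show "ys \<in> (\<lambda>(g, xs). g # xs) ` (SIGMA g:carrier G. ?C g)"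
      using Cons_mem_comm_tuples by blast
  qed (auto simp: Cons_mem_comm_tuples)
  moreover have "inj_on (\<lambda>(g, xs). g # xs) (SIGMA g:carrier G. ?C g)"
    by (auto simp: inj_on_def)
  ultimately have "card (comm_tuples G (Suc n)) = card (SIGMA g:carrier G. ?C g)"
    by (simp add: card_image)
  also have "\<dots> = (\<Sum>g\<in>carrier G. card (?C g))"
    using assms finite_comm_tuples by (intro card_SigmaI) auto
  finally show ?thesis .
qed

lemma alpha_mult_order:
  assumes "finite (carrier G)"
  shows "alpha G n * order G = (\<Sum>g\<in>carrier G. card (centralizer G g) ^ n)"
proof -
  have "alpha G n * order G = (\<Sum>g\<in>carrier G. card {xs \<in> tuples G n. set xs \<subseteq> centralizer G g})"
    unfolding alpha_def using assms finite_tuples tuples_conj_closed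
    by (intro burnside_conj_tuples) (auto simp: tuples_def)
  also have "\<dots> = (\<Sum>g\<in>carrier G. card (centralizer G g) ^ n)"
    using assms centralizer_subset by (intro sum.cong card_tuples_in) (auto intro: finite_subset)
  finally show ?thesis .
qed

lemma beta_mult_order:
  assumes "finite (carrier G)"
  shows "beta G n * order G = card (comm_tuples G (Suc n))"
  unfolding beta_def card_comm_tuples_Suc[OF assms] using assms finite_comm_tuples comm_tuples_conj_closed
  by (intro burnside_conj_tuples) (auto simp: comm_tuples_def tuples_def)

end

section \<open>Frobenius groups\<close>

locale frobenius = group G for G :: "('a, 'b) monoid_scheme" (structure) +
  fixes H N :: "'a set"
  assumes finite_carrier: "finite (carrier G)"
    and complement: "frobenius_complement G H"
    and kernel_eq: "N = frobenius_kernel G H"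
begin

lemma complement_subgroup: "subgroup H G"
  using complement unfolding frobenius_complement_def by blast

lemma complement_subset: "H \<subseteq> carrier G"
  using subgroup.subset[OF complement_subgroup] .

lemma one_in_complement: "\<one> \<in> H"
  using subgroup.one_closed[OF complement_subgroup] .

lemma finite_complement: "finite H"
  using complement_subset finite_carrier finite_subset by blast

lemma kernel_subset: "N \<subseteq> carrier G"
  unfolding kernel_eq frobenius_kernel_def by auto

lemma one_in_kernel: "\<one> \<in> N"
  unfolding kernel_eq frobenius_kernel_def by auto

lemma finite_kernel: "finite N"
  using kernel_subset finite_carrier finite_subset by blast

lemma conj_mem_complement_imp_mem:
  assumes g: "g \<in> carrier G" and h: "h \<in> H - {\<one>}" and conj: "g \<otimes> h \<otimes> inv g \<in> H"
  shows "g \<in> H"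
proof (rule ccontr)
  assume "g \<notin> H"
  then have "H \<inter> conj_set G g H = {\<one>}"
    using g complement unfolding frobenius_complement_def by blast
  moreover have "g \<otimes> h \<otimes> inv g \<in> conj_set G g H"
    using h unfolding conj_set_def by blast
  moreover have "h \<in> carrier G" "h \<noteq> \<one>"
    using h complement_subset by auto
  then have "g \<otimes> h \<otimes> inv g \<noteq> \<one>"
    using g conj_eq_one_iff by simp
  ultimately show False using conj by blast
qed

lemma nonkernel_eq: "carrier G - N = (\<Union>a\<in>carrier G. conj_set G a H) - {\<one>}"
proof -
  have "(\<Union>a\<in>carrier G. conj_set G a H) \<subseteq> carrier G"
    using conj_set_subset complement_subset by blast
  then show ?thesis
    unfolding kernel_eq frobenius_kernel_def by blast
qed

lemma not_in_kernel_iff: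
  "g \<in> carrier G - N \<longleftrightarrow> (\<exists>a\<in>carrier G. \<exists>h\<in>H - {\<one>}. g = a \<otimes> h \<otimes> inv a)"
proof
  assume "g \<in> carrier G - N"
  then obtain a where a: "a \<in> carrier G" and "g \<in> conj_set G a H" and "g \<noteq> \<one>"
    unfolding nonkernel_eq by blast
  then obtain h where h: "h \<in> H" and g: "g = a \<otimes> h \<otimes> inv a" "g \<noteq> \<one>"
    unfolding conj_set_def by blast
  with a have "h \<noteq> \<one>" by auto
  with a h g show "\<exists>a\<in>carrier G. \<exists>h\<in>H - {\<one>}. g = a \<otimes> h \<otimes> inv a" by blast
next
  assume "\<exists>a\<in>carrier G. \<exists>h\<in>H - {\<one>}. g = a \<otimes> h \<otimes> inv a"
  then obtain a h where a: "a \<in> carrier G" and h: "h \<in> H" "h \<noteq> \<one>" and g: "g = a \<otimes> h \<otimes> inv a"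
    by blast
  have "h \<in> carrier G"
    using h complement_subset by blast
  with a h g have "g \<noteq> \<one>"
    using conj_eq_one_iff by simp
  moreover have "g \<in> conj_set G a H"
    using h g unfolding conj_set_def by blast
  ultimately show "g \<in> carrier G - N"
    unfolding nonkernel_eq using a by blast
qed

lemma centralizer_complement_subset:
  assumes "h \<in> H - {\<one>}"
  shows "centralizer G h \<subseteq> H"
proof
  fix y assume "y \<in> centralizer G h"
  moreover have "h \<in> carrier G" using assms complement_subset by blast
  ultimately have y: "y \<in> carrier G" and "y \<otimes> h \<otimes> inv y = h"
    using conj_eq_self_iff unfolding centralizer_def by auto
  with assms show "y \<in> H"
    using conj_mem_complement_imp_mem[OF y assms] by simp
qed

lemma centralizer_kernel_subset:
  assumes g: "g \<in> N - {\<one>}"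
  shows "centralizer G g \<subseteq> N"
proof
  fix y assume y: "y \<in> centralizer G g"
  show "y \<in> N"
  proof (rule ccontr)
    assume "y \<notin> N"
    with y have "y \<in> carrier G - N"
      using centralizer_subset by blast
    then obtain a h where a: "a \<in> carrier G" and h: "h \<in> H - {\<one>}" and y_eq: "y = a \<otimes> h \<otimes> inv a"
      unfolding not_in_kernel_iff by blast
    have "h \<in> carrier G" using h complement_subset by blast
    have "g \<in> centralizer G y"
      using y g kernel_subset unfolding centralizer_def by auto
    also have "centralizer G y = conj_set G a (centralizer G h)"
      using centralizer_conj[OF a \<open>h \<in> carrier G\<close>] y_eq by simp
    also have "\<dots> \<subseteq> conj_set G a H"
      using conj_set_mono centralizer_complement_subset[OF h] by blast
    finally have "g \<in> conj_set G a H" .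
    then obtain k where k: "k \<in> H" and g_eq: "g = a \<otimes> k \<otimes> inv a"
      unfolding conj_set_def by blast
    have "k \<noteq> \<one>"
    proof
      assume "k = \<one>"
      with a g_eq have "g = \<one>" by simp
      with g show False by blast
    qed
    with a k g_eq have "g \<in> carrier G - N"
      unfolding not_in_kernel_iff by blast
    with g show False by blast
  qed
qed

lemma card_complement_pos: "card H > 0"
  using finite_complement one_in_complement card_gt_0_iff by blast

lemma card_kernel_pos: "card N > 0"
  using finite_kernel one_in_kernel card_gt_0_iff by blast

lemma card_conj_fibre:
  assumes a: "a \<in> carrier G" and h: "h \<in> H - {\<one>}"
  shows "card {x \<in> carrier G \<times> (H - {\<one>}). (\<lambda>(b, k). b \<otimes> k \<otimes> inv b) x = a \<otimes> h \<otimes> inv a}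
    = card H"
proof -
  let ?F = "{x \<in> carrier G \<times> (H - {\<one>}). (\<lambda>(b, k). b \<otimes> k \<otimes> inv b) x = a \<otimes> h \<otimes> inv a}"
  let ?\<phi> = "\<lambda>c. (a \<otimes> c, inv c \<otimes> h \<otimes> c)"
  have hG: "h \<in> carrier G" using h complement_subset by blast
  have "?F = ?\<phi> ` H"
  proof (intro equalityI subsetI)
    fix x assume "x \<in> ?F"
    then obtain b k where x: "x = (b, k)" and b: "b \<in> carrier G" and k: "k \<in> H - {\<one>}"
      and conj: "b \<otimes> k \<otimes> inv b = a \<otimes> h \<otimes> inv a"
      by auto
    have kG: "k \<in> carrier G" using k complement_subset by blast
    define c where "c = inv a \<otimes> b"
    have c: "c \<in> carrier G" "b = a \<otimes> c"
      unfolding c_def using a b by (simp_all add: mult_inv_cancel_left)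
    have "a \<otimes> (c \<otimes> k \<otimes> inv c) \<otimes> inv a = a \<otimes> h \<otimes> inv a"
      using conj a c kG by (simp add: conj_conj)
    moreover have "c \<otimes> k \<otimes> inv c \<in> carrier G"
      using c kG by simp
    ultimately have ckc: "c \<otimes> k \<otimes> inv c = h"
      using conjugation_is_inj[OF a _ hG] by blast
    then have "c \<in> H"
      using c k h conj_mem_complement_imp_mem by blast
    moreover have "k = inv c \<otimes> h \<otimes> c"
    proof -
      have "inv c \<otimes> (c \<otimes> k \<otimes> inv c) \<otimes> c = k"
        using c kG by (simp add: m_assoc inv_mult_cancel_left)
      then show ?thesis using ckc by simp
    qed
    ultimately show "x \<in> ?\<phi> ` H"
      using x c by blast
  next
    fix x assume "x \<in> ?\<phi> ` H"
    then obtain c where c: "c \<in> H" and x: "x = ?\<phi> c" by blast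
    have cG: "c \<in> carrier G" using c complement_subset by blast
    have "inv c \<otimes> h \<otimes> c \<in> H"
      using c h complement_subgroup by (simp add: subgroup.m_closed subgroup.m_inv_closed)
    moreover have "inv c \<otimes> h \<otimes> c \<noteq> \<one>"
      using conj_eq_one_iff[of "inv c" h] cG hG h by simp
    moreover have "(a \<otimes> c) \<otimes> (inv c \<otimes> h \<otimes> c) \<otimes> inv (a \<otimes> c) = a \<otimes> h \<otimes> inv a"
      using a cG hG by (simp add: m_assoc inv_mult_group mult_inv_cancel_left)
    ultimately show "x \<in> ?F"
      using x a cG by simp
  qed
  moreover have "inj_on ?\<phi> H"
    unfolding inj_on_def using a complement_subset Units_l_cancel Units_eq by blast
  ultimately show ?thesis by (simp add: card_image)
qed

text \<open>Double counting: (a, h) \<mapsto> a h a^-1 maps G \<times> (H - {1}) onto G - N, and its fibre over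
  a h a^-1 is {(a c, c^-1 h c) | c \<in> H}.\<close>
lemma card_nonkernel_mult_card_complement:
  "card (carrier G - N) * card H = order G * (card H - 1)"
proof -
  let ?f = "\<lambda>(b, k). b \<otimes> k \<otimes> inv b"
  let ?A = "carrier G \<times> (H - {\<one>})"
  have image: "?f ` ?A = carrier G - N"
  proof (intro equalityI subsetI)
    fix g assume "g \<in> ?f ` ?A"
    then show "g \<in> carrier G - N"
      using not_in_kernel_iff by auto
  next
    fix g assume "g \<in> carrier G - N"
    then obtain a h where "a \<in> carrier G" "h \<in> H - {\<one>}" "g = a \<otimes> h \<otimes> inv a"
      using not_in_kernel_iff by blast
    then show "g \<in> ?f ` ?A" by force
  qed
  have "card {x \<in> ?A. ?f x = y} = card H" if "y \<in> ?f ` ?A" for y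
    using that card_conj_fibre by auto
  then have "card ?A = card (carrier G - N) * card H"
    using card_eq_card_image_mult_fibres[of ?A ?f] finite_carrier finite_complement image by auto
  then show ?thesis
    using finite_complement one_in_complement by (simp add: card_cartesian_product order_def)
qed

lemma card_kernel_add_card_nonkernel: "card N + card (carrier G - N) = order G"
  using card_Diff_subset[OF finite_kernel kernel_subset] card_mono[OF finite_carrier kernel_subset]
  unfolding order_def by simp

lemma card_kernel_mult_card_complement: "card N * card H = order G"
proof -
  obtain j where j: "card H = Suc j"
    using card_complement_pos gr0_implies_Suc by blast
  have nonkernel: "card (carrier G - N) * Suc j = order G * j"
    using card_nonkernel_mult_card_complement j by simp
  have "order G * Suc j = (card N + card (carrier G - N)) * Suc j"
    using card_kernel_add_card_nonkernel by simp
  also have "\<dots> = card N * Suc j + order G * j"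
    by (simp only: add_mult_distrib nonkernel)
  finally have "order G + order G * j = card N * Suc j + order G * j"
    by (simp only: mult_Suc_right)
  then show ?thesis
    using j by simp
qed

lemma card_nonkernel: "card (carrier G - N) = card N * (card H - 1)"
proof -
  have "card (carrier G - N) * card H = card N * (card H - 1) * card H"
    using card_nonkernel_mult_card_complement card_kernel_mult_card_complement by (simp add: mult_ac)
  then show ?thesis using card_complement_pos by simp
qed

end

locale abelian_frobenius = frobenius +
  assumes kernel_commute: "\<forall>x\<in>N. \<forall>y\<in>N. x \<otimes> y = y \<otimes> x"
    and complement_commute: "\<forall>x\<in>H. \<forall>y\<in>H. x \<otimes> y = y \<otimes> x"
begin

lemma centralizer_kernel: "g \<in> N - {\<one>} \<Longrightarrow> centralizer G g = N"
  using centralizer_kernel_subset kernel_commute kernel_subset unfolding centralizer_def by blast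

lemma centralizer_nonkernel:
  assumes "g \<in> carrier G - N"
  shows "\<exists>a\<in>carrier G. centralizer G g = conj_set G a H"
proof -
  obtain a h where a: "a \<in> carrier G" and h: "h \<in> H - {\<one>}" and g: "g = a \<otimes> h \<otimes> inv a"
    using assms not_in_kernel_iff by blast
  have "centralizer G h = H"
    using centralizer_complement_subset[OF h] h complement_commute complement_subset
    unfolding centralizer_def by blast
  moreover have "h \<in> carrier G"
    using h complement_subset by blast
  ultimately have "centralizer G g = conj_set G a H"
    using g centralizer_conj[OF a] by simp
  with a show ?thesis by blast
qed

lemma sum_centralizers:
  fixes F :: "'a set \<Rightarrow> nat" and f :: "nat \<Rightarrow> nat"
  assumes F: "\<And>X. X \<subseteq> carrier G \<Longrightarrow> finite X \<Longrightarrow> \<forall>x\<in>X. \<forall>y\<in>X. x \<otimes> y = y \<otimes> x \<Longrightarrow> F X = f (card X)"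
  shows "(\<Sum>g\<in>carrier G. F (centralizer G g)) =
    F (carrier G) + (card N - 1) * f (card N) + card N * (card H - 1) * f (card H)"
proof -
  have carrier_split: "carrier G = insert \<one> ((N - {\<one>}) \<union> (carrier G - N))"
    using kernel_subset one_in_kernel by auto
  have kernel_part: "(\<Sum>g\<in>N - {\<one>}. F (centralizer G g)) = (card N - 1) * f (card N)"
    using F centralizer_kernel kernel_subset finite_kernel kernel_commute one_in_kernel by simp
  have "F (centralizer G g) = f (card H)" if g: "g \<in> carrier G - N" for g
  proof -
    from centralizer_nonkernel[OF g] obtain a
      where a: "a \<in> carrier G" and "centralizer G g = conj_set G a H" ..
    moreover have "finite (conj_set G a H)"
      using finite_subset[OF conj_set_subset[OF a complement_subset] finite_carrier] .
    ultimately show ?thesis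
      using F conj_set_subset conj_set_commuting card_conj_set complement_subset complement_commute
      by simp
  qed
  then have nonkernel_part:
    "(\<Sum>g\<in>carrier G - N. F (centralizer G g)) = card N * (card H - 1) * f (card H)"
    using card_nonkernel by simp
  have "(\<Sum>g\<in>carrier G. F (centralizer G g)) =
      F (centralizer G \<one>) + (\<Sum>g\<in>(N - {\<one>}) \<union> (carrier G - N). F (centralizer G g))"
    using finite_kernel finite_carrier one_in_kernel by (subst carrier_split) simp
  also have "(\<Sum>g\<in>(N - {\<one>}) \<union> (carrier G - N). F (centralizer G g)) =
      (\<Sum>g\<in>N - {\<one>}. F (centralizer G g)) + (\<Sum>g\<in>carrier G - N. F (centralizer G g))"
    using finite_kernel finite_carrier by (intro sum.union_disjoint) auto
  finally show ?thesis
    unfolding kernel_part nonkernel_part centralizer_one by simp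
qed

lemma alpha_mult_order_eq:
  "alpha G n * order G = order G ^ n + (card N - 1) * card N ^ n + card N * (card H - 1) * card H ^ n"
  using alpha_mult_order[OF finite_carrier] sum_centralizers[of "\<lambda>X. card X ^ n" "\<lambda>k. k ^ n"]
  by (simp add: order_def)

lemma card_comm_tuples_Suc_eq:
  "card (comm_tuples G (Suc n)) =
    card (comm_tuples G n) + (card N - 1) * card N ^ n + card N * (card H - 1) * card H ^ n"
proof -
  have "{xs \<in> comm_tuples G n. set xs \<subseteq> carrier G} = comm_tuples G n"
    unfolding comm_tuples_def tuples_def by auto
  then show ?thesis
    using card_comm_tuples_Suc[OF finite_carrier] card_comm_tuples_in_commuting
      sum_centralizers[of "\<lambda>X. card {xs \<in> comm_tuples G n. set xs \<subseteq> X}" "\<lambda>k. k ^ n"]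
    by simp
qed

lemma alpha_eq:
  "real (alpha G n) = 1 / real (order G) *
    (real (order G) ^ n + (real (card N) - 1) * real (card N) ^ n
      + real (card N) * (real (card H) - 1) * real (card H) ^ n)"
proof -
  have "real (alpha G n) * real (order G) =
      real (order G) ^ n + (real (card N) - 1) * real (card N) ^ n
      + real (card N) * (real (card H) - 1) * real (card H) ^ n"
    using arg_cong[OF alpha_mult_order_eq, of real] card_kernel_pos card_complement_pos
    by simp
  moreover have "order G > 0"
    using order_gt_0_iff_finite finite_carrier by simp
  ultimately show ?thesis by (simp add: field_simps)
qed

lemma beta_mult_order_Suc:
  "beta G (Suc n) * order G =
    beta G n * order G + (card N - 1) * card N ^ Suc n + card N * (card H - 1) * card H ^ Suc n"
  using beta_mult_order[OF finite_carrier] card_comm_tuples_Suc_eq by simp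

lemma beta_zero: "beta G 0 = 1"
proof -
  have "comm_tuples G 0 = {[]}"
    unfolding comm_tuples_def tuples_def by auto
  then have "card (comm_tuples G 0) = 1" by simp
  then have "beta G 0 * order G = card N + card N * (card H - 1)"
    using beta_mult_order[OF finite_carrier] card_comm_tuples_Suc_eq[of 0] card_kernel_pos by simp
  also have "\<dots> = order G"
    using card_kernel_add_card_nonkernel card_nonkernel by simp
  finally have "beta G 0 * order G = order G" .
  moreover have "order G > 0"
    using order_gt_0_iff_finite finite_carrier by simp
  ultimately show ?thesis by simp
qed

lemma beta_Suc:
  "real (beta G (Suc n)) = real (beta G n)
    + (real (card N) - 1) / real (card H) * real (card N) ^ n + (real (card H) - 1) * real (card H) ^ n"
proof -
  define m h where "m = real (card N)" and "h = real (card H)"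
  have pos: "m > 0" "h > 0"
    unfolding m_def h_def using card_kernel_pos card_complement_pos by simp_all
  have "real (beta G (Suc n)) * (m * h) =
      real (beta G n) * (m * h) + (m - 1) * m ^ Suc n + m * (h - 1) * h ^ Suc n"
    using arg_cong[OF beta_mult_order_Suc, of real] card_kernel_pos card_complement_pos
    unfolding m_def h_def card_kernel_mult_card_complement[symmetric] by simp
  also have "\<dots> = (real (beta G n) + (m - 1) / h * m ^ n + (h - 1) * h ^ n) * (m * h)"
    using pos by (simp add: field_simps)
  finally show ?thesis
    unfolding m_def[symmetric] h_def[symmetric] using pos by simp
qed

end

section \<open>Generating functions\<close>

lemma inverse_one_minus_const_fps_X:
  "inverse (1 - fps_const (c :: 'a :: field_char_0) * fps_X) = Abs_fps (\<lambda>n. c ^ n)"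
  using one_minus_const_fps_X_neg_power'[of 1 c] by simp

lemma Abs_fps_eq_geometric_combination:
  fixes a :: "nat \<Rightarrow> 'a :: field_char_0"
  assumes "\<And>n. a n = c * (g ^ n + p * m ^ n + q * h ^ n)"
  shows "Abs_fps a = fps_const c *
    (inverse (1 - fps_const g * fps_X) + fps_const p * inverse (1 - fps_const m * fps_X)
      + fps_const q * inverse (1 - fps_const h * fps_X))"
  by (rule fps_ext) (simp add: inverse_one_minus_const_fps_X assms)

lemma Abs_fps_eq_partial_sums_geometric:
  fixes b :: "nat \<Rightarrow> 'a :: field_char_0"
  assumes "b 0 = 1" and "\<And>n. b (Suc n) = b n + p * m ^ n + q * h ^ n"
  shows "Abs_fps b = inverse (1 - fps_X) *
    (1 + fps_const p * fps_X * inverse (1 - fps_const m * fps_X)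
      + fps_const q * fps_X * inverse (1 - fps_const h * fps_X))"
proof -
  let ?R = "1 + fps_const p * fps_X * inverse (1 - fps_const m * fps_X)
      + fps_const q * fps_X * inverse (1 - fps_const h * fps_X)"
  have "(1 - fps_X) * Abs_fps b = ?R"
  proof (rule fps_ext)
    fix n show "fps_nth ((1 - fps_X) * Abs_fps b) n = fps_nth ?R n"
      unfolding inverse_one_minus_const_fps_X using assms by (cases n) (simp_all add: algebra_simps)
  qed
  moreover have "inverse (1 - fps_X) * (1 - fps_X) = (1 :: 'a fps)"
    by (rule inverse_mult_eq_1) simp
  ultimately show ?thesis
    by (metis mult.assoc mult_1)
qed

theorem corollary9p4:
  fixes G :: "('a, 'b) monoid_scheme" and H N :: "'a set"
  assumes "group G"
    and "finite (carrier G)"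
    and "frobenius_complement G H"
    and "N = frobenius_kernel G H"
    and "\<forall>x \<in> N. \<forall>y \<in> N. x \<otimes>\<^bsub>G\<^esub> y = y \<otimes>\<^bsub>G\<^esub> x"
    and "\<forall>x \<in> H. \<forall>y \<in> H. x \<otimes>\<^bsub>G\<^esub> y = y \<otimes>\<^bsub>G\<^esub> x"
  shows "(A_fps G = fps_const (1 / real (card (carrier G))) *
           (inverse (1 - fps_const (real (card (carrier G))) * fps_X)
            + fps_const (real (card N) - 1) * inverse (1 - fps_const (real (card N)) * fps_X)
            + fps_const (real (card N) * (real (card H) - 1)) * inverse (1 - fps_const (real (card H)) * fps_X))) \<and>
         (B_fps G = inverse (1 - fps_X) *
           (1 + fps_const ((real (card N) - 1) / real (card H)) * fps_X * inverse (1 - fps_const (real (card N)) * fps_X)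
              + fps_const (real (card H) - 1) * fps_X * inverse (1 - fps_const (real (card H)) * fps_X)))"
proof -
  interpret abelian_frobenius G H N
    using assms
    by (intro abelian_frobenius.intro frobenius.intro frobenius_axioms.intro
        abelian_frobenius_axioms.intro)
  show ?thesis
    unfolding A_fps_def B_fps_def
    by (intro conjI Abs_fps_eq_geometric_combination Abs_fps_eq_partial_sums_geometric)
      (simp_all add: alpha_eq beta_zero beta_Suc order_def)
qed

end
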